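(* Let $G$ be a graph with $n$ vertices and $m$ edges, and let $t(G)$ be its number of triangles. Then \[ 6n\,t(G)\geq \bigl(n+\lambda_n(G)\bigr)\sum_{u\in V(G)} d^2(u)-2nm\,\lambda_n(G), \] with equality if and only if $G$ is a complete multipartite graph (i.e. $V(G)$ can be partitioned into nonempty independent sets such that any two vertices in different sets are adjacent; a single part, i.e. an edgeless graph, is allowed).
   Context: All graphs are finite, simple and undirected. $d(u)$ denotes the degree of vertex $u$, and $t(G)$ the number of triangles (copies of $K_3$) in $G$. For a graph $G$ of order $n$, $L(G)=D(G)-A(G)$ is its Laplacian, where $A(G)$ is the adjacency matrix and $D(G)$ the diagonal degree matrix; its eigenvalues are $0=\lambda_1(G)\leq\dots\leq\lambda_n(G)$, so $\lambda_n(G)$ is the largest Laplacian eigenvalue. *)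

theory Defs
  imports "HOL-Analysis.Analysis"
begin

definition simple_graph :: "('n::finite \<Rightarrow> 'n \<Rightarrow> bool) \<Rightarrow> bool" where
  "simple_graph E \<longleftrightarrow> (\<forall>u v. E u v \<longrightarrow> E v u) \<and> (\<forall>u. \<not> E u u)"

definition degree :: "('n::finite \<Rightarrow> 'n \<Rightarrow> bool) \<Rightarrow> 'n \<Rightarrow> nat" where
  "degree E u = card {v. E u v}"

definition edges :: "('n::finite \<Rightarrow> 'n \<Rightarrow> bool) \<Rightarrow> 'n set set" where
  "edges E = {{u, v} | u v. E u v}"

definition triangles :: "('n::finite \<Rightarrow> 'n \<Rightarrow> bool) \<Rightarrow> 'n set set" where
  "triangles E = {{u, v, w} | u v w. E u v \<and> E v w \<and> E u w}"

definition num_triangles :: "('n::finite \<Rightarrow> 'n \<Rightarrow> bool) \<Rightarrow> nat" where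
  "num_triangles E = card (triangles E)"

definition adjacency_matrix :: "('n::finite \<Rightarrow> 'n \<Rightarrow> bool) \<Rightarrow> real^'n^'n" where
  "adjacency_matrix E = (\<chi> i j. if E i j then 1 else 0)"

definition degree_matrix :: "('n::finite \<Rightarrow> 'n \<Rightarrow> bool) \<Rightarrow> real^'n^'n" where
  "degree_matrix E = (\<chi> i j. if i = j then real (degree E i) else 0)"

definition laplacian :: "('n::finite \<Rightarrow> 'n \<Rightarrow> bool) \<Rightarrow> real^'n^'n" where
  "laplacian E = degree_matrix E - adjacency_matrix E"

definition is_eigenvalue :: "real^'n^'n \<Rightarrow> real \<Rightarrow> bool" where
  "is_eigenvalue A \<mu> \<longleftrightarrow> (\<exists>x. x \<noteq> 0 \<and> A *v x = \<mu> *\<^sub>R x)"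

definition lap_max :: "('n::finite \<Rightarrow> 'n \<Rightarrow> bool) \<Rightarrow> real" where
  "lap_max E = Max {\<mu>. is_eigenvalue (laplacian E) \<mu>}"

definition complete_multipartite :: "('n::finite \<Rightarrow> 'n \<Rightarrow> bool) \<Rightarrow> bool" where
  "complete_multipartite E \<longleftrightarrow>
     (\<exists>P. \<Union>P = UNIV \<and> (\<forall>A\<in>P. A \<noteq> {}) \<and>
          (\<forall>A\<in>P. \<forall>B\<in>P. A \<noteq> B \<longrightarrow> A \<inter> B = {}) \<and>
          (\<forall>A\<in>P. \<forall>u\<in>A. \<forall>v\<in>A. \<not> E u v) \<and>
          (\<forall>A\<in>P. \<forall>B\<in>P. A \<noteq> B \<longrightarrow> (\<forall>u\<in>A. \<forall>v\<in>B. E u v)))"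

end

theory Submission
  imports Defs
begin

(* For a vertex w let x_w be the indicator vector of the neighbourhood of w minus its mean,
   i.e. the w-th row of the adjacency matrix projected onto the orthogonal complement of
   the all-ones vector. Summed over w, the squared norms of the x_w give 2m - \<Sum>d\<^sup>2/n and
   their Laplacian forms give \<Sum>d\<^sup>2 - 6t(G), so the Rayleigh bound
   x \<bullet> L x \<le> \<lambda>\<^sub>n (x \<bullet> x) yields the inequality, the slack being n times the sum of
   the gaps \<lambda>\<^sub>n (x_w \<bullet> x_w) - x_w \<bullet> L x_w.
   Equality forces every x_w to be a \<lambda>\<^sub>n-eigenvector. If uv is an edge, the u-th
   coordinate of L x_u = \<lambda>\<^sub>n x_u gives \<lambda>\<^sub>n = n, and x \<bullet> L x = n (x \<bullet> x) holds
   exactly for vectors summing to 0 that are constant on non-adjacent pairs. So each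
   x_w is such a vector, i.e. non-adjacent vertices have the same neighbours, which
   characterises complete multipartite graphs. *)

section \<open>Rayleigh quotients of symmetric matrices\<close>

lemma symmetric_matrix_inner:
  fixes A :: "real^'n^'n"
  assumes "transpose A = A"
  shows "(A *v x) \<bullet> y = x \<bullet> (A *v y)"
  by (metis assms dot_lmul_matrix vector_transpose_matrix)

(* The nonnegative form y \<mapsto> y \<bullet> B y is minimal at x, so its gradient 2 B x vanishes:
   test it at x - t B x for a small t > 0. *)
lemma psd_form_zero_imp_kernel:
  fixes B :: "real^'n^'n"
  assumes sym: "transpose B = B" and psd: "\<And>y. 0 \<le> y \<bullet> (B *v y)"
    and zero: "x \<bullet> (B *v x) = 0"
  shows "B *v x = 0"
proof -
  define z where "z = B *v x"
  define a where "a = z \<bullet> (B *v z)"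
  define b where "b = z \<bullet> z"
  define t where "t = b / (a + 1)"
  have a: "0 \<le> a" unfolding a_def by (rule psd)
  have "0 \<le> (x - t *\<^sub>R z) \<bullet> (B *v (x - t *\<^sub>R z))" by (rule psd)
  also have "\<dots> = t\<^sup>2 * a - 2 * t * b"
    using zero symmetric_matrix_inner[OF sym, of z x]
    by (simp add: a_def b_def z_def linear_diff linear_scale inner_diff inner_commute
        power2_eq_square algebra_simps)
  finally have "0 \<le> (a + 1)\<^sup>2 * (t\<^sup>2 * a - 2 * t * b)"
    by simp
  also have "\<dots> = - b\<^sup>2 * (a + 2)"
  proof -
    have "b = t * (a + 1)" using a by (simp add: t_def)
    then show ?thesis by (simp add: power2_eq_square algebra_simps)
  qed
  finally have "b = 0" using a by (simp add: mult_le_0_iff)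
  then show ?thesis by (simp add: b_def z_def)
qed

lemma quadratic_form_bound_attained_imp_eigenvector:
  fixes A :: "real^'n^'n"
  assumes sym: "transpose A = A" and bound: "\<And>y. y \<bullet> (A *v y) \<le> \<mu> * (y \<bullet> y)"
    and attained: "x \<bullet> (A *v x) = \<mu> * (x \<bullet> x)"
  shows "A *v x = \<mu> *\<^sub>R x"
proof -
  have B: "(mat \<mu> - A) *v y = \<mu> *\<^sub>R y - A *v y" for y
    by (simp add: vec_eq_iff matrix_vector_mult_def mat_def left_diff_distrib sum_subtractf
        if_distrib[of "\<lambda>a. a * _"] cong: if_cong)
  have "(mat \<mu> - A) *v x = 0"
  proof (rule psd_form_zero_imp_kernel)
    show "transpose (mat \<mu> - A) = mat \<mu> - A"
      using sym by (simp add: vec_eq_iff transpose_def mat_def)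
    show "0 \<le> y \<bullet> ((mat \<mu> - A) *v y)" for y
      using bound[of y] by (simp add: B inner_diff_right)
    show "x \<bullet> ((mat \<mu> - A) *v x) = 0"
      using attained by (simp add: B inner_diff_right)
  qed
  then show ?thesis by (simp add: B)
qed

lemma symmetric_eigenvalues_finite:
  fixes A :: "real^'n^'n"
  assumes sym: "transpose A = A"
  shows "finite {\<mu>. is_eigenvalue A \<mu>}"
proof -
  define S where "S = {\<mu>. is_eigenvalue A \<mu>}"
  define v where "v \<mu> = (SOME x. x \<noteq> 0 \<and> A *v x = \<mu> *\<^sub>R x)" for \<mu>
  have v: "v \<mu> \<noteq> 0" "A *v v \<mu> = \<mu> *\<^sub>R v \<mu>" if "\<mu> \<in> S" for \<mu>
    using someI_ex[of "\<lambda>x. x \<noteq> 0 \<and> A *v x = \<mu> *\<^sub>R x"] that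
    by (auto simp: S_def v_def is_eigenvalue_def)
  have orth: "v \<mu> \<bullet> v \<nu> = 0" if "\<mu> \<in> S" "\<nu> \<in> S" "\<mu> \<noteq> \<nu>" for \<mu> \<nu>
  proof -
    have "\<mu> * (v \<mu> \<bullet> v \<nu>) = \<nu> * (v \<mu> \<bullet> v \<nu>)"
      using symmetric_matrix_inner[OF sym, of "v \<mu>" "v \<nu>"] v that by simp
    then show ?thesis using that(3) by simp
  qed
  have inj: "inj_on v S"
    using orth v(1) by (metis inj_onI inner_eq_zero_iff)
  have "pairwise orthogonal (v ` S)"
    using orth by (auto simp: pairwise_def orthogonal_def)
  moreover have "0 \<notin> v ` S" using v(1) by auto
  ultimately have "finite (v ` S)"
    using pairwise_orthogonal_independent independent_bound by blast
  then show ?thesis using inj finite_imageD by (auto simp: S_def)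
qed

lemma symmetric_greatest_eigenvalue_exists:
  fixes A :: "real^'n^'n"
  assumes sym: "transpose A = A"
  obtains \<mu> where "is_eigenvalue A \<mu>" and "\<And>x. x \<bullet> (A *v x) \<le> \<mu> * (x \<bullet> x)"
proof -
  have "\<exists>x0\<in>sphere 0 1. \<forall>y\<in>sphere 0 1. y \<bullet> (A *v y) \<le> x0 \<bullet> (A *v x0)"
    by (intro continuous_attains_sup compact_sphere continuous_intros) simp
  then obtain x0 where x0: "x0 \<in> sphere 0 1"
    and max: "\<And>y. y \<in> sphere 0 1 \<Longrightarrow> y \<bullet> (A *v y) \<le> x0 \<bullet> (A *v x0)"
    by blast
  define \<mu> where "\<mu> = x0 \<bullet> (A *v x0)"
  have bound: "x \<bullet> (A *v x) \<le> \<mu> * (x \<bullet> x)" for x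
  proof (cases "x = 0")
    case False
    define u where "u = x /\<^sub>R norm x"
    have "x \<bullet> (A *v x) = (norm x)\<^sup>2 * (u \<bullet> (A *v u))"
      using False by (simp add: u_def linear_scale power2_eq_square field_simps)
    also have "\<dots> \<le> (norm x)\<^sup>2 * \<mu>"
      using max[of u] False by (simp add: u_def \<mu>_def mult_left_mono)
    finally show ?thesis by (simp add: power2_norm_eq_inner mult.commute)
  qed simp
  have "x0 \<bullet> x0 = 1" using x0 by (simp add: dot_square_norm)
  then have "A *v x0 = \<mu> *\<^sub>R x0"
    using bound
    by (intro quadratic_form_bound_attained_imp_eigenvector[OF sym]) (simp_all add: \<mu>_def)
  moreover have "x0 \<noteq> 0" using x0 by auto
  ultimately have "is_eigenvalue A \<mu>" unfolding is_eigenvalue_def by blast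
  then show thesis using bound that by blast
qed

lemma
  fixes A :: "real^'n^'n"
  assumes sym: "transpose A = A"
  shows is_eigenvalue_Max_symmetric: "is_eigenvalue A (Max {\<mu>. is_eigenvalue A \<mu>})"
    and quadratic_form_le_Max_eigenvalue: "x \<bullet> (A *v x) \<le> Max {\<mu>. is_eigenvalue A \<mu>} * (x \<bullet> x)"
proof -
  obtain \<mu> where \<mu>: "is_eigenvalue A \<mu>" and bound: "\<And>x. x \<bullet> (A *v x) \<le> \<mu> * (x \<bullet> x)"
    using symmetric_greatest_eigenvalue_exists[OF sym] by blast
  have "\<nu> \<le> \<mu>" if \<nu>: "is_eigenvalue A \<nu>" for \<nu>
  proof -
    obtain v where "v \<noteq> 0" "A *v v = \<nu> *\<^sub>R v"
      using \<nu> by (auto simp: is_eigenvalue_def)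
    then show ?thesis using bound[of v] by simp
  qed
  then have "Max {\<mu>. is_eigenvalue A \<mu>} = \<mu>"
    using \<mu> symmetric_eigenvalues_finite[OF sym] by (intro Max_eqI) auto
  then show "is_eigenvalue A (Max {\<mu>. is_eigenvalue A \<mu>})"
    and "x \<bullet> (A *v x) \<le> Max {\<mu>. is_eigenvalue A \<mu>} * (x \<bullet> x)"
    using \<mu> bound by simp_all
qed

section \<open>The Laplacian quadratic form\<close>

(* Keep sums of adjacency indicators as sums over all vertices, so that they can be
   swapped and combined termwise. *)
declare sum_of_bool_eq [simp del] sum_of_bool_mult_eq [simp del] sum_mult_of_bool_eq [simp del]

lemma real_degree_eq_sum: "real (degree E i) = (\<Sum>j\<in>UNIV. of_bool (E i j))"
  by (simp add: degree_def sum_of_bool_eq)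

lemma sum_adjacent_swap:
  assumes "simple_graph E"
  shows "(\<Sum>i\<in>UNIV. \<Sum>j\<in>UNIV. of_bool (E i j) * f i j)
       = (\<Sum>i\<in>UNIV. \<Sum>j\<in>UNIV. of_bool (E i j) * (f j i :: real))"
proof -
  have "E i j = E j i" for i j
    using assms by (auto simp: simple_graph_def)
  then show ?thesis by (subst sum.swap) simp
qed

lemma laplacian_mult_nth:
  "(laplacian E *v x) $ i = real (degree E i) * x $ i - (\<Sum>j\<in>UNIV. of_bool (E i j) * x $ j)"
  by (simp add: laplacian_def degree_matrix_def adjacency_matrix_def matrix_vector_mult_def
      left_diff_distrib sum_subtractf if_distrib[of "\<lambda>a. a * _"] of_bool_def cong: if_cong)

lemma transpose_laplacian: "simple_graph E \<Longrightarrow> transpose (laplacian E) = laplacian E"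
  by (auto simp: transpose_def laplacian_def degree_matrix_def adjacency_matrix_def vec_eq_iff
      simple_graph_def)

lemma laplacian_quadratic_form:
  assumes "simple_graph E"
  shows "x \<bullet> (laplacian E *v x) = (\<Sum>i\<in>UNIV. \<Sum>j\<in>UNIV. of_bool (E i j) * (x$i - x$j)\<^sup>2) / 2"
proof -
  define g where "g i j = x$i * x$i - x$i * x$j" for i j
  have "x \<bullet> (laplacian E *v x) = (\<Sum>i\<in>UNIV. \<Sum>j\<in>UNIV. of_bool (E i j) * g i j)"
    unfolding inner_vec_def laplacian_mult_nth real_degree_eq_sum g_def
    by (simp add: sum_distrib_left sum_distrib_right sum_subtractf algebra_simps)
  moreover have "(\<Sum>i\<in>UNIV. \<Sum>j\<in>UNIV. of_bool (E i j) * (x$i - x$j)\<^sup>2)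
      = (\<Sum>i\<in>UNIV. \<Sum>j\<in>UNIV. of_bool (E i j) * g i j)
      + (\<Sum>i\<in>UNIV. \<Sum>j\<in>UNIV. of_bool (E i j) * g j i)"
    unfolding sum.distrib[symmetric]
    by (intro sum.cong refl) (simp add: g_def power2_eq_square algebra_simps)
  ultimately show ?thesis
    using sum_adjacent_swap[OF assms, of g] by simp
qed

(* n (x \<bullet> x) - (\<Sum>i. x$i)\<^sup>2 is the Laplacian form of the complete graph, whose edges
   are those of E together with those of its complement. *)
lemma card_norm_minus_laplacian_form:
  fixes x :: "real^'n::finite"
  assumes "simple_graph E"
  shows "real CARD('n) * (x \<bullet> x) - x \<bullet> (laplacian E *v x)
       = (\<Sum>i\<in>UNIV. x$i)\<^sup>2 + (\<Sum>i\<in>UNIV. \<Sum>j\<in>UNIV. of_bool (\<not> E i j) * (x$i - x$j)\<^sup>2) / 2"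
proof -
  have "(\<Sum>i\<in>UNIV. \<Sum>j\<in>UNIV. (x$i - x$j)\<^sup>2) = 2 * real CARD('n) * (x \<bullet> x) - 2 * (\<Sum>i\<in>UNIV. x$i)\<^sup>2"
    by (simp add: inner_vec_def power2_diff algebra_simps sum.distrib sum_subtractf
        sum_distrib_left sum_distrib_right power2_eq_square sum_product)
  then show ?thesis
    by (simp add: laplacian_quadratic_form[OF assms] of_bool_not_iff left_diff_distrib
        sum_subtractf) (simp add: field_simps)
qed

lemma laplacian_form_le_card_norm:
  fixes x :: "real^'n::finite"
  assumes "simple_graph E"
  shows "x \<bullet> (laplacian E *v x) \<le> real CARD('n) * (x \<bullet> x)"
proof -
  have "0 \<le> (\<Sum>i\<in>UNIV. x$i)\<^sup>2 + (\<Sum>i\<in>UNIV. \<Sum>j\<in>UNIV. of_bool (\<not> E i j) * (x$i - x$j)\<^sup>2) / 2"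
    by (intro add_nonneg_nonneg divide_nonneg_pos sum_nonneg mult_nonneg_nonneg) auto
  then show ?thesis using card_norm_minus_laplacian_form[OF assms, of x] by simp
qed

lemma lap_max_is_eigenvalue: "simple_graph E \<Longrightarrow> is_eigenvalue (laplacian E) (lap_max E)"
  unfolding lap_max_def by (rule is_eigenvalue_Max_symmetric[OF transpose_laplacian])

lemma laplacian_form_le_lap_max:
  "simple_graph E \<Longrightarrow> x \<bullet> (laplacian E *v x) \<le> lap_max E * (x \<bullet> x)"
  unfolding lap_max_def by (rule quadratic_form_le_Max_eigenvalue[OF transpose_laplacian])

lemma laplacian_form_eq_lap_max_imp_eigenvector:
  assumes "simple_graph E" and "x \<bullet> (laplacian E *v x) = lap_max E * (x \<bullet> x)"
  shows "laplacian E *v x = lap_max E *\<^sub>R x"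
  using assms laplacian_form_le_lap_max
  by (intro quadratic_form_bound_attained_imp_eigenvector[OF transpose_laplacian]) auto

lemma lap_max_le_card:
  fixes E :: "'n::finite \<Rightarrow> 'n \<Rightarrow> bool"
  assumes "simple_graph E"
  shows "lap_max E \<le> real CARD('n)"
proof -
  obtain x where "x \<noteq> 0" and x: "laplacian E *v x = lap_max E *\<^sub>R x"
    using lap_max_is_eigenvalue[OF assms] by (auto simp: is_eigenvalue_def)
  then have "0 < x \<bullet> x" by simp
  moreover have "lap_max E * (x \<bullet> x) \<le> real CARD('n) * (x \<bullet> x)"
    using laplacian_form_le_card_norm[OF assms, of x] by (simp add: x)
  ultimately show ?thesis by simp
qed

section \<open>Counting edges and triangles\<close>

lemma card_eq_mult_card_image:
  assumes "finite A" and "\<And>y. y \<in> f ` A \<Longrightarrow> card {x\<in>A. f x = y} = k"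
  shows "card A = k * card (f ` A)"
proof -
  have "(\<Sum>x\<in>A. card {y\<in>f ` A. f x = y}) = k * card (f ` A)"
    using assms by (intro sum_multicount) auto
  moreover have "{y\<in>f ` A. f x = y} = {f x}" if "x \<in> A" for x
    using that by auto
  ultimately show ?thesis by simp
qed

lemma sum_degree_eq_twice_card_edges:
  assumes "simple_graph E"
  shows "(\<Sum>u\<in>UNIV. real (degree E u)) = 2 * real (card (edges E))"
proof -
  define darts where "darts = {(u, v). E u v}"
  define ends where "ends = (\<lambda>(u, v). {u, v} :: 'a set)"
  have "darts = Sigma UNIV (\<lambda>u. {v. E u v})"
    by (auto simp: darts_def)
  then have "card darts = (\<Sum>u\<in>UNIV. degree E u)"
    by (simp add: card_SigmaI degree_def)
  moreover have "card darts = 2 * card (ends ` darts)"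
  proof (rule card_eq_mult_card_image)
    fix e assume "e \<in> ends ` darts"
    then obtain u v where uv: "E u v" "e = {u, v}"
      by (auto simp: darts_def ends_def)
    then have "{p\<in>darts. ends p = e} = {(u, v), (v, u)}"
      using assms by (auto simp: darts_def ends_def doubleton_eq_iff simple_graph_def)
    moreover have "u \<noteq> v" using uv assms by (auto simp: simple_graph_def)
    ultimately show "card {p\<in>darts. ends p = e} = 2" by simp
  qed simp
  moreover have "ends ` darts = edges E"
    by (auto simp: darts_def ends_def edges_def)
  ultimately have "(\<Sum>u\<in>UNIV. degree E u) = 2 * card (edges E)"
    by simp
  then show ?thesis
    by (metis of_nat_mult of_nat_numeral of_nat_sum)
qed

lemma card_ordered_copies_of_triangle:
  assumes "simple_graph E" and uvw: "E u v" "E u w" "E v w"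
  shows "card {(a, b, c). E a b \<and> E a c \<and> E b c \<and> {a, b, c} = {u, v, w}} = 6"
proof -
  have "{(a, b, c). E a b \<and> E a c \<and> E b c \<and> {a, b, c} = {u, v, w}}
      = {(u, v, w), (u, w, v), (v, u, w), (v, w, u), (w, u, v), (w, v, u)}"
  proof (intro equalityI subsetI)
    fix p assume "p \<in> {(a, b, c). E a b \<and> E a c \<and> E b c \<and> {a, b, c} = {u, v, w}}"
    then obtain a b c where p: "p = (a, b, c)" and abc: "E a b" "E a c" "E b c"
      and same: "{a, b, c} = {u, v, w}"
      by auto
    have "a \<in> {u, v, w}" "b \<in> {u, v, w}" "c \<in> {u, v, w}"
      using same by blast+
    moreover have "a \<noteq> b" "a \<noteq> c" "b \<noteq> c"
      using abc assms(1) by (auto simp: simple_graph_def)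
    ultimately show "p \<in> {(u, v, w), (u, w, v), (v, u, w), (v, w, u), (w, u, v), (w, v, u)}"
      unfolding p by auto
  qed (use uvw assms(1) in \<open>auto simp: simple_graph_def insert_commute\<close>)
  moreover have "u \<noteq> v" "v \<noteq> w" "u \<noteq> w"
    using uvw assms(1) by (auto simp: simple_graph_def)
  ultimately show ?thesis by simp
qed

lemma sum_triangle_products_eq_six_num_triangles:
  assumes "simple_graph E"
  shows "(\<Sum>w\<in>UNIV. \<Sum>i\<in>UNIV. \<Sum>j\<in>UNIV. of_bool (E w i) * of_bool (E w j) * of_bool (E i j))
       = 6 * real (num_triangles E)"
proof -
  define T where "T = {(u, v, w). E u v \<and> E u w \<and> E v w}"
  define vertices where "vertices = (\<lambda>(u, v, w). {u, v, w} :: 'a set)"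
  have "(\<Sum>w\<in>UNIV. \<Sum>i\<in>UNIV. \<Sum>j\<in>UNIV. of_bool (E w i) * of_bool (E w j) * of_bool (E i j))
      = (\<Sum>p\<in>UNIV. of_bool (p \<in> T) :: real)"
    unfolding sum.cartesian_product UNIV_Times_UNIV
    by (rule sum.cong) (auto simp: T_def)
  also have "\<dots> = real (card T)"
    by (simp add: sum_of_bool_eq)
  also have "card T = 6 * card (vertices ` T)"
  proof (rule card_eq_mult_card_image)
    fix t assume "t \<in> vertices ` T"
    then obtain u v w where "E u v" "E u w" "E v w" "t = {u, v, w}"
      by (auto simp: T_def vertices_def)
    moreover have "{p\<in>T. vertices p = {u, v, w}}
        = {(a, b, c). E a b \<and> E a c \<and> E b c \<and> {a, b, c} = {u, v, w}}"
      by (auto simp: T_def vertices_def)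
    ultimately show "card {p\<in>T. vertices p = t} = 6"
      using card_ordered_copies_of_triangle[OF assms] by simp
  qed simp
  also have "vertices ` T = triangles E"
    by (auto simp: T_def vertices_def triangles_def)
  finally show ?thesis by (simp add: num_triangles_def)
qed

section \<open>Centred neighbourhood vectors\<close>

definition centred_nbhd :: "('n::finite \<Rightarrow> 'n \<Rightarrow> bool) \<Rightarrow> 'n \<Rightarrow> real^'n" where
  "centred_nbhd E w = (\<chi> i. of_bool (E w i) - real (degree E w) / real CARD('n))"

lemma sum_centred_nbhd: "(\<Sum>i\<in>UNIV. centred_nbhd E w $ i) = 0"
  by (simp add: centred_nbhd_def sum_subtractf real_degree_eq_sum)

lemma inner_centred_nbhd:
  fixes E :: "'n::finite \<Rightarrow> 'n \<Rightarrow> bool"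
  shows "centred_nbhd E w \<bullet> centred_nbhd E w
       = real (degree E w) - real (degree E w) ^ 2 / real CARD('n)"
proof -
  define c where "c = real (degree E w) / real CARD('n)"
  have "centred_nbhd E w \<bullet> centred_nbhd E w
      = (\<Sum>i\<in>UNIV. of_bool (E w i) - 2 * c * of_bool (E w i) + c\<^sup>2)"
    unfolding inner_vec_def centred_nbhd_def c_def[symmetric]
    by (intro sum.cong refl) (simp add: power2_eq_square algebra_simps)
  also have "\<dots> = real (degree E w) - 2 * c * real (degree E w) + real CARD('n) * c\<^sup>2"
    by (simp add: sum.distrib sum_subtractf sum_distrib_left real_degree_eq_sum)
  also have "\<dots> = real (degree E w) - real (degree E w) ^ 2 / real CARD('n)"
    by (simp add: c_def field_simps power2_eq_square)
  finally show ?thesis .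
qed

lemma laplacian_form_centred_nbhd:
  assumes "simple_graph E"
  shows "centred_nbhd E w \<bullet> (laplacian E *v centred_nbhd E w)
       = (\<Sum>i\<in>UNIV. \<Sum>j\<in>UNIV. of_bool (E i j) * of_bool (E w i))
       - (\<Sum>i\<in>UNIV. \<Sum>j\<in>UNIV. of_bool (E w i) * of_bool (E w j) * of_bool (E i j))"
proof -
  have "of_bool (E i j) * (of_bool (E w i) - of_bool (E w j))\<^sup>2
      = of_bool (E i j) * of_bool (E w i) + of_bool (E i j) * of_bool (E w j)
        - 2 * (of_bool (E w i) * of_bool (E w j) * of_bool (E i j) :: real)" for i j
    by simp
  then have "centred_nbhd E w \<bullet> (laplacian E *v centred_nbhd E w)
      = ((\<Sum>i\<in>UNIV. \<Sum>j\<in>UNIV. of_bool (E i j) * of_bool (E w i))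
        + (\<Sum>i\<in>UNIV. \<Sum>j\<in>UNIV. of_bool (E i j) * of_bool (E w j))
        - 2 * (\<Sum>i\<in>UNIV. \<Sum>j\<in>UNIV. of_bool (E w i) * of_bool (E w j) * of_bool (E i j))) / 2"
    by (simp add: laplacian_quadratic_form[OF assms] centred_nbhd_def sum.distrib sum_subtractf
        sum_distrib_left)
  then show ?thesis
    using sum_adjacent_swap[OF assms, of "\<lambda>i j. of_bool (E w i)"] by simp
qed

lemma sum_inner_centred_nbhd:
  fixes E :: "'n::finite \<Rightarrow> 'n \<Rightarrow> bool"
  assumes "simple_graph E"
  shows "(\<Sum>w\<in>UNIV. centred_nbhd E w \<bullet> centred_nbhd E w)
       = 2 * real (card (edges E)) - (\<Sum>u\<in>UNIV. real (degree E u) ^ 2) / real CARD('n)"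
  by (simp add: inner_centred_nbhd sum_subtractf sum_divide_distrib
      sum_degree_eq_twice_card_edges[OF assms])

lemma sum_laplacian_form_centred_nbhd:
  assumes "simple_graph E"
  shows "(\<Sum>w\<in>UNIV. centred_nbhd E w \<bullet> (laplacian E *v centred_nbhd E w))
       = (\<Sum>u\<in>UNIV. real (degree E u) ^ 2) - 6 * real (num_triangles E)"
proof -
  have "(\<Sum>w\<in>UNIV. \<Sum>i\<in>UNIV. \<Sum>j\<in>UNIV. of_bool (E i j) * of_bool (E w i) :: real)
      = (\<Sum>i\<in>UNIV. \<Sum>w\<in>UNIV. \<Sum>j\<in>UNIV. of_bool (E i j) * of_bool (E w i))"
    by (rule sum.swap)
  also have "\<dots> = (\<Sum>i\<in>UNIV. \<Sum>w\<in>UNIV. \<Sum>j\<in>UNIV. of_bool (E i w) * of_bool (E i j))"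
    using assms by (intro sum.cong refl) (auto simp: simple_graph_def)
  also have "\<dots> = (\<Sum>i\<in>UNIV. (\<Sum>w\<in>UNIV. of_bool (E i w)) * (\<Sum>j\<in>UNIV. of_bool (E i j)))"
    by (simp add: sum_product)
  also have "\<dots> = (\<Sum>u\<in>UNIV. real (degree E u) ^ 2)"
    by (simp add: real_degree_eq_sum power2_eq_square)
  finally show ?thesis
    by (simp add: laplacian_form_centred_nbhd[OF assms] sum_subtractf
        sum_triangle_products_eq_six_num_triangles[OF assms])
qed

section \<open>The equality case\<close>

definition nonadjacent_are_twins :: "('n::finite \<Rightarrow> 'n \<Rightarrow> bool) \<Rightarrow> bool" where
  "nonadjacent_are_twins E \<longleftrightarrow> (\<forall>i j. \<not> E i j \<longrightarrow> (\<forall>w. E w i \<longleftrightarrow> E w j))"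

lemma equiv_nonadjacency:
  assumes "simple_graph E" and "nonadjacent_are_twins E"
  shows "equiv UNIV {(i, j). \<not> E i j}"
proof (rule equivI)
  show "refl_on UNIV {(i, j). \<not> E i j}" and "sym {(i, j). \<not> E i j}"
    using assms(1) by (auto simp: refl_on_def sym_def simple_graph_def)
  show "trans {(i, j). \<not> E i j}"
    using assms(2) unfolding trans_def nonadjacent_are_twins_def by blast
qed simp

lemma complete_multipartite_if_nonadjacent_are_twins:
  assumes "simple_graph E" and "nonadjacent_are_twins E"
  shows "complete_multipartite E"
proof -
  define r where "r = {(i, j). \<not> E i j}"
  have r: "equiv UNIV r"
    unfolding r_def using assms by (rule equiv_nonadjacency)
  show ?thesis
    unfolding complete_multipartite_def
  proof (intro exI[of _ "UNIV // r"] conjI ballI impI)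
    show "\<Union> (UNIV // r) = UNIV"
      using r by (rule Union_quotient)
    show "A \<noteq> {}" if "A \<in> UNIV // r" for A
      using r that by (rule in_quotient_imp_non_empty)
    show "A \<inter> B = {}" if "A \<in> UNIV // r" "B \<in> UNIV // r" "A \<noteq> B" for A B
      using quotient_disj[OF r] that by blast
    show "\<not> E u v" if "A \<in> UNIV // r" "u \<in> A" "v \<in> A" for A u v
      using in_quotient_imp_in_rel[OF r] that by (auto simp: r_def)
    show "E u v" if "A \<in> UNIV // r" "B \<in> UNIV // r" "A \<noteq> B" "u \<in> A" "v \<in> B" for A B u v
      using quotient_eqI[OF r] that by (auto simp: r_def)
  qed
qed

lemma nonadjacent_are_twins_if_complete_multipartite:
  assumes "complete_multipartite E"
  shows "nonadjacent_are_twins E"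
  unfolding nonadjacent_are_twins_def
proof (intro allI impI)
  fix i j w assume "\<not> E i j"
  obtain P where cover: "\<Union>P = UNIV"
    and independent: "\<forall>A\<in>P. \<forall>u\<in>A. \<forall>v\<in>A. \<not> E u v"
    and complete: "\<forall>A\<in>P. \<forall>B\<in>P. A \<noteq> B \<longrightarrow> (\<forall>u\<in>A. \<forall>v\<in>B. E u v)"
    using assms unfolding complete_multipartite_def by (elim exE conjE) (rule that)
  have "i \<in> \<Union>P" "j \<in> \<Union>P" "w \<in> \<Union>P"
    by (simp_all add: cover)
  then obtain A B C where "A \<in> P" "i \<in> A" "B \<in> P" "j \<in> B" "C \<in> P" "w \<in> C"
    by blast
  moreover have "A = B"
    using complete \<open>\<not> E i j\<close> calculation by blast
  ultimately show "E w i \<longleftrightarrow> E w j"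
    using independent complete by (cases "C = A") blast+
qed

lemma complete_multipartite_iff_nonadjacent_are_twins:
  "simple_graph E \<Longrightarrow> complete_multipartite E \<longleftrightarrow> nonadjacent_are_twins E"
  using complete_multipartite_if_nonadjacent_are_twins
    nonadjacent_are_twins_if_complete_multipartite by blast

lemma laplacian_form_eq_card_norm_iff:
  fixes x :: "real^'n::finite"
  assumes "simple_graph E"
  shows "x \<bullet> (laplacian E *v x) = real CARD('n) * (x \<bullet> x)
     \<longleftrightarrow> (\<Sum>i\<in>UNIV. x$i) = 0 \<and> (\<forall>i j. \<not> E i j \<longrightarrow> x$i = x$j)"
proof -
  define f where "f i j = of_bool (\<not> E i j) * (x$i - x$j)\<^sup>2" for i j
  have f: "0 \<le> f i j" for i j
    by (simp add: f_def)
  have "x \<bullet> (laplacian E *v x) = real CARD('n) * (x \<bullet> x)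
      \<longleftrightarrow> (\<Sum>i\<in>UNIV. x$i)\<^sup>2 + (\<Sum>i\<in>UNIV. \<Sum>j\<in>UNIV. f i j) / 2 = 0"
    using card_norm_minus_laplacian_form[OF assms, of x] by (auto simp: f_def)
  also have "\<dots> \<longleftrightarrow> (\<Sum>i\<in>UNIV. x$i) = 0 \<and> (\<forall>i j. f i j = 0)"
    using f by (simp add: add_nonneg_eq_0_iff sum_nonneg sum_nonneg_eq_0_iff)
  also have "\<dots> \<longleftrightarrow> (\<Sum>i\<in>UNIV. x$i) = 0 \<and> (\<forall>i j. \<not> E i j \<longrightarrow> x$i = x$j)"
    by (auto simp: f_def)
  finally show ?thesis .
qed

lemma lap_max_eq_card_if_nonadjacent_are_twins:
  fixes E :: "'n::finite \<Rightarrow> 'n \<Rightarrow> bool"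
  assumes sg: "simple_graph E" and twins: "nonadjacent_are_twins E" and "E u v"
  shows "lap_max E = real CARD('n)"
proof -
  define U where "U = {z. \<not> E u z}"
  define V where "V = {z. \<not> E v z}"
  have same_side: "i \<in> U \<longleftrightarrow> j \<in> U" "i \<in> V \<longleftrightarrow> j \<in> V" if "\<not> E i j" for i j
    using equiv_nonadjacency[OF sg twins] that
    unfolding U_def V_def equiv_def sym_def trans_def by blast+
  have "U \<inter> V = {}" and "u \<in> U" and "v \<in> V"
    using equiv_nonadjacency[OF sg twins] \<open>E u v\<close>
    unfolding U_def V_def equiv_def refl_on_def sym_def trans_def by blast+
  define y where "y = (\<chi> i. of_bool (i \<in> U) * real (card V) - of_bool (i \<in> V) * real (card U))"
  have "(\<Sum>i\<in>UNIV. y$i) = 0"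
    using \<open>U \<inter> V = {}\<close> by (simp add: y_def sum_subtractf sum_of_bool_mult_eq)
  moreover have "\<not> E i j \<longrightarrow> y$i = y$j" for i j
    using same_side by (simp add: y_def)
  ultimately have "y \<bullet> (laplacian E *v y) = real CARD('n) * (y \<bullet> y)"
    using laplacian_form_eq_card_norm_iff[OF sg] by blast
  then have "real CARD('n) * (y \<bullet> y) \<le> lap_max E * (y \<bullet> y)"
    using laplacian_form_le_lap_max[OF sg, of y] by simp
  moreover have "y $ u \<noteq> 0"
    using \<open>U \<inter> V = {}\<close> \<open>u \<in> U\<close> \<open>v \<in> V\<close> by (auto simp: y_def card_eq_0_iff)
  then have "0 < y \<bullet> y"
    by (metis inner_gt_zero_iff zero_index)
  ultimately show ?thesis
    using lap_max_le_card[OF sg] by simp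
qed

lemma laplacian_centred_nbhd_nth_self:
  fixes E :: "'n::finite \<Rightarrow> 'n \<Rightarrow> bool"
  assumes "simple_graph E"
  shows "(laplacian E *v centred_nbhd E w) $ w = - real (degree E w)"
proof -
  define c where "c = real (degree E w) / real CARD('n)"
  have "(\<Sum>j\<in>UNIV. of_bool (E w j) * centred_nbhd E w $ j) = (\<Sum>j\<in>UNIV. of_bool (E w j) * (1 - c))"
    by (intro sum.cong refl) (simp add: centred_nbhd_def c_def)
  also have "\<dots> = real (degree E w) * (1 - c)"
    by (simp add: sum_distrib_right real_degree_eq_sum)
  finally show ?thesis
    using assms
    by (simp add: laplacian_mult_nth centred_nbhd_def c_def simple_graph_def algebra_simps)
qed

lemma centred_nbhd_attain_lap_max_iff:
  fixes E :: "'n::finite \<Rightarrow> 'n \<Rightarrow> bool"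
  assumes sg: "simple_graph E"
  shows "(\<forall>w. centred_nbhd E w \<bullet> (laplacian E *v centred_nbhd E w)
              = lap_max E * (centred_nbhd E w \<bullet> centred_nbhd E w))
     \<longleftrightarrow> nonadjacent_are_twins E"
    (is "(\<forall>w. ?attains w) \<longleftrightarrow> _")
proof (cases "\<exists>u v. E u v")
  case False
  then have "centred_nbhd E w = 0" for w
    by (simp add: centred_nbhd_def degree_def vec_eq_iff)
  with False show ?thesis
    by (simp add: nonadjacent_are_twins_def)
next
  case True
  then obtain u v where "E u v" by blast
  have n_pos: "0 < real CARD('n)" by simp
  have twins_iff: "nonadjacent_are_twins E \<longleftrightarrow>
      (\<forall>w. centred_nbhd E w \<bullet> (laplacian E *v centred_nbhd E w)
            = real CARD('n) * (centred_nbhd E w \<bullet> centred_nbhd E w))"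
    by (simp add: laplacian_form_eq_card_norm_iff[OF sg] sum_centred_nbhd)
      (auto simp: centred_nbhd_def nonadjacent_are_twins_def)
  show ?thesis
  proof
    assume attains: "\<forall>w. ?attains w"
    have "laplacian E *v centred_nbhd E u = lap_max E *\<^sub>R centred_nbhd E u"
      using attains laplacian_form_eq_lap_max_imp_eigenvector[OF sg] by blast
    then have "(laplacian E *v centred_nbhd E u) $ u = lap_max E * centred_nbhd E u $ u"
      by simp
    then have "- real (degree E u) = lap_max E * (- real (degree E u) / real CARD('n))"
      using sg unfolding laplacian_centred_nbhd_nth_self[OF sg]
      by (simp add: centred_nbhd_def simple_graph_def)
    moreover have "degree E u \<noteq> 0"
      using \<open>E u v\<close> by (auto simp: degree_def)
    ultimately have "lap_max E = real CARD('n)"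
      using n_pos by (simp add: field_simps)
    then show "nonadjacent_are_twins E"
      using attains twins_iff by simp
  next
    assume "nonadjacent_are_twins E"
    then show "\<forall>w. ?attains w"
      using lap_max_eq_card_if_nonadjacent_are_twins[OF sg _ \<open>E u v\<close>] twins_iff by simp
  qed
qed

theorem theorem2:
  fixes E :: "'n::finite \<Rightarrow> 'n \<Rightarrow> bool"
  assumes "simple_graph E"
  defines "n \<equiv> real CARD('n)"
      and "m \<equiv> real (card (edges E))"
      and "lam \<equiv> lap_max E"
  shows "6 * n * real (num_triangles E)
           \<ge> (n + lam) * (\<Sum>u\<in>UNIV. real (degree E u) ^ 2) - 2 * n * m * lam
         \<and> (6 * n * real (num_triangles E)
           = (n + lam) * (\<Sum>u\<in>UNIV. real (degree E u) ^ 2) - 2 * n * m * lam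
         \<longleftrightarrow> complete_multipartite E)"
proof -
  define X where "X = centred_nbhd E"
  define gap where "gap w = lam * (X w \<bullet> X w) - X w \<bullet> (laplacian E *v X w)" for w
  have gap_nonneg: "0 \<le> gap w" for w
    using laplacian_form_le_lap_max[OF assms(1)] by (simp add: gap_def lam_def)
  have "(\<Sum>w\<in>UNIV. gap w)
      = lam * (2 * m - (\<Sum>u\<in>UNIV. real (degree E u) ^ 2) / n)
        - ((\<Sum>u\<in>UNIV. real (degree E u) ^ 2) - 6 * real (num_triangles E))"
    unfolding gap_def X_def sum_subtractf sum_distrib_left[symmetric] n_def m_def
    by (simp add: sum_inner_centred_nbhd[OF assms(1)] sum_laplacian_form_centred_nbhd[OF assms(1)])
  then have "6 * n * real (num_triangles E)
        - ((n + lam) * (\<Sum>u\<in>UNIV. real (degree E u) ^ 2) - 2 * n * m * lam)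
      = n * (\<Sum>w\<in>UNIV. gap w)"
    by (simp add: n_def field_simps)
  moreover have "gap w = 0 \<longleftrightarrow> X w \<bullet> (laplacian E *v X w) = lam * (X w \<bullet> X w)" for w
    by (auto simp: gap_def)
  then have "(\<Sum>w\<in>UNIV. gap w) = 0 \<longleftrightarrow> complete_multipartite E"
    using centred_nbhd_attain_lap_max_iff[OF assms(1)]
      complete_multipartite_iff_nonadjacent_are_twins[OF assms(1)]
    by (simp add: sum_nonneg_eq_0_iff gap_nonneg X_def lam_def)
  moreover have "0 < n" and "0 \<le> (\<Sum>w\<in>UNIV. gap w)"
    using gap_nonneg by (simp_all add: n_def sum_nonneg)
  ultimately show ?thesis
    by (smt (verit) mult_pos_pos mult_eq_0_iff)
qed

end
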